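(* Let $\{(\mathbf{x}_i,\mathbf{z}_i)\}_{i=1}^n$ be given covariate vectors $\mathbf{x}_i$ and linkage-related variables $\mathbf{z}_i$ from a linked file. Consider a generic record $(\mathbf{x},\mathbf{z},m,\mathbf{y})$, where $(\mathbf{x},\mathbf{z})$ is distributed according to the probability measure $P$ placing mass $1/n$ on each of $(\mathbf{x}_1,\mathbf{z}_1),\dots,(\mathbf{x}_n,\mathbf{z}_n)$; $m\in\{0,1\}$ is a mismatch indicator; and $\mathbf{y}$ is a response whose conditional density given $\mathbf{x}$ is $f(\mathbf{y}\mid\mathbf{x};\boldsymbol\theta)$ and which satisfies $\mathbf{y}\perp \mathbf{z}\mid \mathbf{x}$. Suppose the probability of a correct match satisfies $$\mathbf{P}(m=0\mid \mathbf{x},\mathbf{y},\mathbf{z};\boldsymbol\gamma)=\mathbf{P}(m=0\mid\mathbf{z};\boldsymbol\gamma)=h(\mathbf{z};\boldsymbol\gamma)$$ for a function $h$ taking values in $[0,1)$ on the $\mathbf{z}_i$ (so that $\sum_{k=1}^n(1-h(\mathbf{z}_k;\boldsymbol\gamma))>0$). Then the conditional density of $\mathbf{y}$ given $m=1$, evaluated at any point $\mathbf{y}_i$, is $$f(\mathbf{y}_i\mid m=1)=\sum_{j=1}^n \omega_j(\mathbf{z}_j;\boldsymbol\gamma)\, f(\mathbf{y}_i\mid \mathbf{x}_j;\boldsymbol\theta),\qquad 1\le i\le n,$$ where $$\omega_j(\mathbf{z}_j;\boldsymbol\gamma)=\frac{1-h(\mathbf{z}_j;\boldsymbol\gamma)}{\sum_{k=1}^n\bigl(1-h(\mathbf{z}_k;\boldsymbol\gamma)\bigr)},\qquad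 1\le j\le n.$$
   Context: Setting: post-linkage regression. A linked file consists of pairs $(\mathbf{x}_i,\mathbf{y}_i)$, $1\le i\le n$, with auxiliary variables $\mathbf{z}_i$ related to the record linkage process, and latent mismatch indicators $m_i$ ($m_i=0$ for a correct match, $m_i=1$ for a mismatch). The regression model of interest specifies the conditional density $f(\mathbf{y}\mid\mathbf{x};\boldsymbol\theta)$ with parameter $\boldsymbol\theta$; $\boldsymbol\gamma$ parametrizes the correct-match probability $h(\mathbf{z};\boldsymbol\gamma)=\mathbf{P}(m=0\mid\mathbf{z};\boldsymbol\gamma)$. The variables $\mathbf{x}$ and $\mathbf{z}$ may overlap or be dependent (including $\mathbf{x}=\mathbf{z}$). Notation: $f(\cdot\mid\cdot)$ denotes a (conditional) density of the random variables indicated by its arguments; $\perp$ denotes conditional independence. *)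

theory Defs
  imports "HOL-Probability.Probability"
begin

definition is_cond_density ::
  "'a measure \<Rightarrow> 'y measure \<Rightarrow> ('a \<Rightarrow> 'y) \<Rightarrow> 'a set \<Rightarrow> ('y \<Rightarrow> real) \<Rightarrow> bool" where
  "is_cond_density M N Y E g \<longleftrightarrow>
     E \<in> sets M \<and> measure M E > 0 \<and>
     g \<in> borel_measurable N \<and> (\<forall>y\<in>space N. g y \<ge> 0) \<and> integrable N g \<and>
     (\<forall>B\<in>sets N. measure M {\<omega>\<in>space M. Y \<omega> \<in> B \<and> \<omega> \<in> E}
                    = measure M E * (LINT y:B|N. g y))"

definition omega :: "nat \<Rightarrow> (nat \<Rightarrow> 'z) \<Rightarrow> ('z \<Rightarrow> 'g \<Rightarrow> real) \<Rightarrow> 'g \<Rightarrow> nat \<Rightarrow> real" where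
  "omega n zs h \<gamma> j = (1 - h (zs j) \<gamma>) / (\<Sum>k<n. (1 - h (zs k) \<gamma>))"

end

theory Submission
  imports Defs
begin

text \<open>Condition on the finitely many cells \<open>(X, Z) = (x\<^sub>i, z\<^sub>i)\<close> of the empirical law.
  Within a cell the mismatch probability is \<open>1 - h(z\<^sub>i)\<close> whatever \<open>Y\<close> does, and by the
  conditional independence of \<open>Y\<close> and \<open>Z\<close> given \<open>X\<close> the response still has density
  \<open>f(\<cdot> | x\<^sub>i)\<close> there. Averaging over the cells with mass \<open>1/n\<close> gives
  \<open>P(Y \<in> B, m = 1) = (1/n) \<Sum>\<^sub>i (1 - h(z\<^sub>i)) \<integral>\<^sub>B f(\<cdot> | x\<^sub>i)\<close>, and taking \<open>B\<close> to be the
  whole space gives \<open>P(m = 1) = (1/n) \<Sum>\<^sub>i (1 - h(z\<^sub>i))\<close>; the quotient is the mixture with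
  weights \<open>\<omega>\<^sub>j\<close>.\<close>

lemma sum_fibres_card:
  assumes "finite A"
  shows "(\<Sum>x\<in>A. g (r x)) = (\<Sum>y\<in>r ` A. of_nat (card {x\<in>A. r x = y}) * g y)"
proof -
  have "(\<Sum>x\<in>A. g (r x)) = (\<Sum>y\<in>r ` A. \<Sum>x\<in>{x\<in>A. r x = y}. g (r x))"
    using assms by (rule sum.image_gen)
  also have "\<dots> = (\<Sum>y\<in>r ` A. of_nat (card {x\<in>A. r x = y}) * g y)"
    by (intro sum.cong refl) simp
  finally show ?thesis .
qed

lemma (in prob_space) prob_eq_sum_fibres:
  assumes "finite S" and cell_sets: "\<And>w. w \<in> S \<Longrightarrow> {\<omega>\<in>space M. W \<omega> = w} \<in> events"
    and AE_S: "AE \<omega> in M. W \<omega> \<in> S" and A: "A \<in> events"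
  shows "prob A = (\<Sum>w\<in>S. prob {\<omega>\<in>A. W \<omega> = w})"
proof -
  have space_A: "{\<omega>\<in>space M. \<omega> \<in> A} = A" "{\<omega>\<in>space M. \<omega> \<in> A \<and> W \<omega> = w} = {\<omega>\<in>A. W \<omega> = w}" for w
    using sets.sets_into_space[OF A] by auto
  have "AE \<omega> in M. (\<forall>w\<in>S. \<omega> \<in> A \<and> W \<omega> = w \<longrightarrow> \<omega> \<in> A)
      \<and> (\<omega> \<in> A \<longrightarrow> (\<exists>!w. w \<in> S \<and> \<omega> \<in> A \<and> W \<omega> = w))"
    using AE_S by eventually_elim auto
  moreover have "{\<omega>\<in>A. W \<omega> = w} = A \<inter> {\<omega>\<in>space M. W \<omega> = w}" for w
    using sets.sets_into_space[OF A] by auto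
  ultimately have "prob {\<omega>\<in>space M. \<omega> \<in> A} = (\<Sum>w\<in>S. prob {\<omega>\<in>space M. \<omega> \<in> A \<and> W \<omega> = w})"
    using \<open>finite S\<close> A cell_sets by (intro prob_sum) (auto simp: space_A)
  then show ?thesis
    by (simp only: space_A)
qed

lemma (in prob_space) prob_eq_empirical_average:
  fixes W :: "'a \<Rightarrow> 'w" and ws :: "nat \<Rightarrow> 'w" and g :: "'w \<Rightarrow> real"
  assumes cell_sets: "\<And>w. {\<omega>\<in>space M. W \<omega> = w} \<in> events" and "n > 0"
    and law: "\<And>w. prob {\<omega>\<in>space M. W \<omega> = w} = real (card {i. i < n \<and> ws i = w}) / real n"
    and A: "A \<in> events"
    and cell: "\<And>w. w \<in> ws ` {..<n} \<Longrightarrow> prob {\<omega>\<in>space M. W \<omega> = w} > 0 \<Longrightarrow>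
                 prob {\<omega>\<in>A. W \<omega> = w} = g w * prob {\<omega>\<in>space M. W \<omega> = w}"
  shows "prob A = (\<Sum>i<n. g (ws i)) / real n"
proof -
  define S where "S = ws ` {..<n}"
  have sum_law: "(\<Sum>w\<in>S. c w * prob {\<omega>\<in>space M. W \<omega> = w}) = (\<Sum>i<n. c (ws i)) / real n" for c
  proof -
    have "(\<Sum>w\<in>S. c w * prob {\<omega>\<in>space M. W \<omega> = w})
        = (\<Sum>w\<in>S. real (card {i. i < n \<and> ws i = w}) * c w) / real n"
      unfolding sum_divide_distrib by (intro sum.cong refl) (simp add: law)
    also have "\<dots> = (\<Sum>i<n. c (ws i)) / real n"
      using sum_fibres_card[of "{..<n}" c ws] by (simp add: S_def)
    finally show ?thesis .
  qed
  have cell_pos: "prob {\<omega>\<in>space M. W \<omega> = w} > 0" if "w \<in> S" for w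
  proof -
    from that obtain j where "j < n" "ws j = w" by (auto simp: S_def)
    then have "card {i. i < n \<and> ws i = w} > 0"
      by (auto simp: card_gt_0_iff)
    with law \<open>n > 0\<close> show ?thesis by simp
  qed
  have "{\<omega>\<in>space M. W \<omega> \<in> S} = (\<Union>w\<in>S. {\<omega>\<in>space M. W \<omega> = w})"
    by auto
  then have S_events: "{\<omega>\<in>space M. W \<omega> \<in> S} \<in> events"
    using cell_sets by (auto simp: S_def)
  have "prob {\<omega>\<in>space M. W \<omega> \<in> S} = (\<Sum>w\<in>S. prob {\<omega>\<in>space M. W \<omega> = w})"
    using S_events cell_sets by (intro prob_sum) (auto simp: S_def intro!: AE_I2)
  also have "\<dots> = 1"
    using sum_law[of "\<lambda>_. 1"] \<open>n > 0\<close> by simp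
  finally have "AE \<omega> in M. W \<omega> \<in> S"
    using prob_eq_1[OF S_events] by simp
  then have "prob A = (\<Sum>w\<in>S. prob {\<omega>\<in>A. W \<omega> = w})"
    using cell_sets A by (intro prob_eq_sum_fibres) (auto simp: S_def)
  also have "\<dots> = (\<Sum>w\<in>S. g w * prob {\<omega>\<in>space M. W \<omega> = w})"
    using cell cell_pos by (intro sum.cong refl) (simp add: S_def)
  finally show ?thesis using sum_law by simp
qed

lemma (in prob_space) prob_binary_complement_within:
  fixes m :: "'a \<Rightarrow> nat"
  assumes [measurable]: "m \<in> measurable M (count_space UNIV)" and C[measurable]: "C \<in> events"
    and m_01: "\<forall>\<omega>\<in>space M. m \<omega> \<in> {0, 1}"
    and match: "prob {\<omega>\<in>C. m \<omega> = 0} = \<eta> * prob C"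
  shows "prob {\<omega>\<in>C. m \<omega> = 1} = (1 - \<eta>) * prob C"
proof -
  have "{\<omega>\<in>C. m \<omega> = 1} = C - {\<omega>\<in>C. m \<omega> = 0}"
    using m_01 sets.sets_into_space[OF C] by (fastforce simp: insert_iff)
  then have "prob {\<omega>\<in>C. m \<omega> = 1} = prob C - prob {\<omega>\<in>C. m \<omega> = 0}"
    by (simp add: finite_measure_Diff)
  then show ?thesis using match by (simp add: algebra_simps)
qed

lemma (in prob_space) prob_cond_indep_transfer:
  assumes [measurable]: "X \<in> measurable M (count_space UNIV)" "Z \<in> measurable M (count_space UNIV)"
    and indep: "prob {\<omega>\<in>space M. Y \<omega> \<in> B \<and> Z \<omega> = b \<and> X \<omega> = a} * prob {\<omega>\<in>space M. X \<omega> = a}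
      = prob {\<omega>\<in>space M. Y \<omega> \<in> B \<and> X \<omega> = a} * prob {\<omega>\<in>space M. Z \<omega> = b \<and> X \<omega> = a}"
    and given_X: "prob {\<omega>\<in>space M. Y \<omega> \<in> B \<and> X \<omega> = a} = prob {\<omega>\<in>space M. X \<omega> = a} * c"
    and pos: "prob {\<omega>\<in>space M. Z \<omega> = b \<and> X \<omega> = a} > 0"
  shows "prob {\<omega>\<in>space M. Y \<omega> \<in> B \<and> Z \<omega> = b \<and> X \<omega> = a}
    = prob {\<omega>\<in>space M. Z \<omega> = b \<and> X \<omega> = a} * c"
proof -
  have "prob {\<omega>\<in>space M. Z \<omega> = b \<and> X \<omega> = a} \<le> prob {\<omega>\<in>space M. X \<omega> = a}"
    by (intro finite_measure_mono) auto
  with pos have "prob {\<omega>\<in>space M. X \<omega> = a} > 0" by simp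
  with indep given_X show ?thesis by (simp add: field_simps)
qed

lemma is_cond_density_sumI:
  fixes w :: "'i \<Rightarrow> real" and g :: "'i \<Rightarrow> 'y \<Rightarrow> real"
  assumes E: "E \<in> sets M" "measure M E > 0"
    and g_meas: "\<And>j. j \<in> J \<Longrightarrow> g j \<in> borel_measurable N"
    and g_nonneg: "\<And>j y. j \<in> J \<Longrightarrow> y \<in> space N \<Longrightarrow> 0 \<le> g j y"
    and g_int: "\<And>j. j \<in> J \<Longrightarrow> integrable N (g j)"
    and w_nonneg: "\<And>j. j \<in> J \<Longrightarrow> 0 \<le> w j"
    and prob: "\<And>B. B \<in> sets N \<Longrightarrow> measure M {\<omega>\<in>space M. Y \<omega> \<in> B \<and> \<omega> \<in> E}
                 = measure M E * (\<Sum>j\<in>J. w j * (LINT y:B|N. g j y))"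
  shows "is_cond_density M N Y E (\<lambda>y. \<Sum>j\<in>J. w j * g j y)"
  unfolding is_cond_density_def
proof (intro conjI ballI)
  show "(\<lambda>y. \<Sum>j\<in>J. w j * g j y) \<in> borel_measurable N"
    using g_meas by (intro borel_measurable_sum borel_measurable_times) auto
  show "0 \<le> (\<Sum>j\<in>J. w j * g j y)" if "y \<in> space N" for y
    using that g_nonneg w_nonneg by (intro sum_nonneg) auto
  show "integrable N (\<lambda>y. \<Sum>j\<in>J. w j * g j y)"
    using g_int by auto
  show "measure M {\<omega>\<in>space M. Y \<omega> \<in> B \<and> \<omega> \<in> E} = measure M E * (LINT y:B|N. \<Sum>j\<in>J. w j * g j y)"
    if B: "B \<in> sets N" for B
  proof -
    have "(\<lambda>y. indicator B y * (\<Sum>j\<in>J. w j * g j y)) = (\<lambda>y. \<Sum>j\<in>J. w j * (indicator B y * g j y))"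
      by (simp add: sum_distrib_left mult.left_commute)
    moreover have "integrable N (\<lambda>y. indicator B y * g j y)" if "j \<in> J" for j
      using integrable_mult_indicator[OF B g_int[OF that]] by simp
    ultimately have "(LINT y:B|N. \<Sum>j\<in>J. w j * g j y) = (\<Sum>j\<in>J. w j * (LINT y:B|N. g j y))"
      by (simp add: set_lebesgue_integral_def integral_sum)
    then show ?thesis using prob[OF B] by simp
  qed
qed (use E in auto)

locale linked_file = prob_space M
  for M :: "'a measure" and N :: "'y measure"
    and X :: "'a \<Rightarrow> 'x" and Z :: "'a \<Rightarrow> 'z" and m :: "'a \<Rightarrow> nat" and Y :: "'a \<Rightarrow> 'y"
    and n :: nat and xs :: "nat \<Rightarrow> 'x" and zs :: "nat \<Rightarrow> 'z"
    and f :: "'y \<Rightarrow> 'x \<Rightarrow> 't \<Rightarrow> real" and \<theta> :: 't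
    and h :: "'z \<Rightarrow> 'g \<Rightarrow> real" and \<gamma> :: 'g +
  assumes n_pos: "n > 0"
    and X_meas[measurable]: "X \<in> measurable M (count_space UNIV)"
    and Z_meas[measurable]: "Z \<in> measurable M (count_space UNIV)"
    and m_meas[measurable]: "m \<in> measurable M (count_space UNIV)"
    and Y_meas[measurable]: "Y \<in> measurable M N"
    and m_01: "\<forall>\<omega>\<in>space M. m \<omega> \<in> {0, 1}"
    and XZ_law: "\<And>a b. prob {\<omega>\<in>space M. X \<omega> = a \<and> Z \<omega> = b}
                   = real (card {i. i < n \<and> xs i = a \<and> zs i = b}) / real n"
    and Y_given_X: "\<And>a B. B \<in> sets N \<Longrightarrow>
        prob {\<omega>\<in>space M. Y \<omega> \<in> B \<and> X \<omega> = a}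
          = prob {\<omega>\<in>space M. X \<omega> = a} * (LINT y:B|N. f y a \<theta>)"
    and Y_indep_Z: "\<And>a b B. B \<in> sets N \<Longrightarrow>
        prob {\<omega>\<in>space M. Y \<omega> \<in> B \<and> Z \<omega> = b \<and> X \<omega> = a} * prob {\<omega>\<in>space M. X \<omega> = a}
        = prob {\<omega>\<in>space M. Y \<omega> \<in> B \<and> X \<omega> = a} * prob {\<omega>\<in>space M. Z \<omega> = b \<and> X \<omega> = a}"
    and match_prob: "\<And>a b B. B \<in> sets N \<Longrightarrow>
        prob {\<omega>\<in>space M. m \<omega> = 0 \<and> X \<omega> = a \<and> Z \<omega> = b \<and> Y \<omega> \<in> B}
          = h b \<gamma> * prob {\<omega>\<in>space M. X \<omega> = a \<and> Z \<omega> = b \<and> Y \<omega> \<in> B}"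
begin

lemma prob_XZ_eq:
  "prob {\<omega>\<in>space M. (X \<omega>, Z \<omega>) = w} = real (card {i. i < n \<and> (xs i, zs i) = w}) / real n"
  using XZ_law[of "fst w" "snd w"] by (cases w) simp

lemma XZ_events: "{\<omega>\<in>space M. (X \<omega>, Z \<omega>) = w} \<in> events"
  by (cases w) simp

lemma prob_mismatch_cell:
  assumes [measurable]: "B \<in> sets N"
  shows "prob {\<omega>\<in>space M. (Y \<omega> \<in> B \<and> m \<omega> = 1) \<and> X \<omega> = a \<and> Z \<omega> = b}
    = (1 - h b \<gamma>) * prob {\<omega>\<in>space M. X \<omega> = a \<and> Z \<omega> = b \<and> Y \<omega> \<in> B}"
proof -
  let ?C = "{\<omega>\<in>space M. X \<omega> = a \<and> Z \<omega> = b \<and> Y \<omega> \<in> B}"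
  have "{\<omega>\<in>space M. (Y \<omega> \<in> B \<and> m \<omega> = 1) \<and> X \<omega> = a \<and> Z \<omega> = b} = {\<omega>\<in>?C. m \<omega> = 1}"
    by auto
  moreover have "{\<omega>\<in>?C. m \<omega> = 0} = {\<omega>\<in>space M. m \<omega> = 0 \<and> X \<omega> = a \<and> Z \<omega> = b \<and> Y \<omega> \<in> B}"
    by auto
  moreover have "?C \<in> events"
    by measurable
  ultimately show ?thesis
    using prob_binary_complement_within[OF m_meas _ m_01] match_prob[OF assms, of a b] by presburger
qed

lemma prob_Y_cell:
  assumes B: "B \<in> sets N" and pos: "prob {\<omega>\<in>space M. X \<omega> = a \<and> Z \<omega> = b} > 0"
  shows "prob {\<omega>\<in>space M. X \<omega> = a \<and> Z \<omega> = b \<and> Y \<omega> \<in> B}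
    = (LINT y:B|N. f y a \<theta>) * prob {\<omega>\<in>space M. X \<omega> = a \<and> Z \<omega> = b}"
proof -
  have "{\<omega>\<in>space M. X \<omega> = a \<and> Z \<omega> = b} = {\<omega>\<in>space M. Z \<omega> = b \<and> X \<omega> = a}"
    by auto
  moreover have "{\<omega>\<in>space M. X \<omega> = a \<and> Z \<omega> = b \<and> Y \<omega> \<in> B}
      = {\<omega>\<in>space M. Y \<omega> \<in> B \<and> Z \<omega> = b \<and> X \<omega> = a}"
    by auto
  ultimately show ?thesis
    using prob_cond_indep_transfer[OF X_meas Z_meas Y_indep_Z[OF B] Y_given_X[OF B]] pos
    by (simp add: mult.commute)
qed

lemma prob_Y_mismatch:
  assumes [measurable]: "B \<in> sets N"
  shows "prob {\<omega>\<in>space M. Y \<omega> \<in> B \<and> m \<omega> = 1}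
    = (\<Sum>i<n. (1 - h (zs i) \<gamma>) * (LINT y:B|N. f y (xs i) \<theta>)) / real n"
proof -
  have "prob {\<omega>\<in>space M. Y \<omega> \<in> B \<and> m \<omega> = 1}
      = (\<Sum>i<n. (\<lambda>(a, b). (1 - h b \<gamma>) * (LINT y:B|N. f y a \<theta>)) (xs i, zs i)) / real n"
  proof (rule prob_eq_empirical_average[OF XZ_events n_pos prob_XZ_eq])
    show "prob {\<omega>\<in>{\<omega>\<in>space M. Y \<omega> \<in> B \<and> m \<omega> = 1}. (X \<omega>, Z \<omega>) = w}
        = (\<lambda>(a, b). (1 - h b \<gamma>) * (LINT y:B|N. f y a \<theta>)) w * prob {\<omega>\<in>space M. (X \<omega>, Z \<omega>) = w}"
      if "prob {\<omega>\<in>space M. (X \<omega>, Z \<omega>) = w} > 0" for w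
      using that prob_mismatch_cell[OF assms] prob_Y_cell[OF assms] by (cases w) simp
  qed simp
  then show ?thesis by simp
qed

lemma prob_mismatch: "prob {\<omega>\<in>space M. m \<omega> = 1} = (\<Sum>i<n. 1 - h (zs i) \<gamma>) / real n"
proof -
  have "prob {\<omega>\<in>space M. m \<omega> = 1} = (\<Sum>i<n. (\<lambda>(a, b). 1 - h b \<gamma>) (xs i, zs i)) / real n"
  proof (rule prob_eq_empirical_average[OF XZ_events n_pos prob_XZ_eq])
    fix w :: "'x \<times> 'z"
    obtain a b where w: "w = (a, b)" by (cases w)
    have "{\<omega>\<in>space M. (Y \<omega> \<in> space N \<and> m \<omega> = 1) \<and> X \<omega> = a \<and> Z \<omega> = b}
        = {\<omega>\<in>{\<omega>\<in>space M. m \<omega> = 1}. (X \<omega>, Z \<omega>) = (a, b)}"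
      "{\<omega>\<in>space M. X \<omega> = a \<and> Z \<omega> = b \<and> Y \<omega> \<in> space N} = {\<omega>\<in>space M. (X \<omega>, Z \<omega>) = (a, b)}"
      using measurable_space[OF Y_meas] by auto
    then show "prob {\<omega>\<in>{\<omega>\<in>space M. m \<omega> = 1}. (X \<omega>, Z \<omega>) = w}
        = (\<lambda>(a, b). 1 - h b \<gamma>) w * prob {\<omega>\<in>space M. (X \<omega>, Z \<omega>) = w}"
      using prob_mismatch_cell[OF sets.top, of a b] by (simp only: w prod.case)
  qed simp
  then show ?thesis by simp
qed

end

theorem lemma1:
  fixes M :: "'a measure" and N :: "'y measure"
    and X :: "'a \<Rightarrow> 'x" and Z :: "'a \<Rightarrow> 'z" and m :: "'a \<Rightarrow> nat" and Y :: "'a \<Rightarrow> 'y"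
    and n :: nat and xs :: "nat \<Rightarrow> 'x" and zs :: "nat \<Rightarrow> 'z"
    and f :: "'y \<Rightarrow> 'x \<Rightarrow> 't \<Rightarrow> real" and \<theta> :: 't
    and h :: "'z \<Rightarrow> 'g \<Rightarrow> real" and \<gamma> :: 'g
  assumes P: "prob_space M"
    and n_pos: "n > 0"
    and X_meas: "X \<in> measurable M (count_space UNIV)"
    and Z_meas: "Z \<in> measurable M (count_space UNIV)"
    and m_meas: "m \<in> measurable M (count_space UNIV)"
    and Y_meas: "Y \<in> measurable M N"
    and m_01: "\<forall>\<omega>\<in>space M. m \<omega> \<in> {0, 1}"
    \<comment> \<open>(X,Z) has law placing mass 1/n on each (x_i, z_i), i < n (with multiplicity)\<close>
    and XZ_law: "\<And>a b. measure M {\<omega>\<in>space M. X \<omega> = a \<and> Z \<omega> = b}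
                   = real (card {i. i < n \<and> xs i = a \<and> zs i = b}) / real n"
    \<comment> \<open>f(. | x; theta) is a density w.r.t. N\<close>
    and f_meas: "\<And>a. (\<lambda>y. f y a \<theta>) \<in> borel_measurable N"
    and f_nonneg: "\<And>a y. y \<in> space N \<Longrightarrow> f y a \<theta> \<ge> 0"
    and f_int: "\<And>a. integrable N (\<lambda>y. f y a \<theta>)"
    \<comment> \<open>conditional density of Y given X is f(. | X; theta)\<close>
    and Y_given_X: "\<And>a B. B \<in> sets N \<Longrightarrow>
        measure M {\<omega>\<in>space M. Y \<omega> \<in> B \<and> X \<omega> = a}
          = measure M {\<omega>\<in>space M. X \<omega> = a} * (LINT y:B|N. f y a \<theta>)"
    \<comment> \<open>Y independent of Z given X\<close>
    and Y_indep_Z: "\<And>a b B. B \<in> sets N \<Longrightarrow>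
        measure M {\<omega>\<in>space M. Y \<omega> \<in> B \<and> Z \<omega> = b \<and> X \<omega> = a}
          * measure M {\<omega>\<in>space M. X \<omega> = a}
        = measure M {\<omega>\<in>space M. Y \<omega> \<in> B \<and> X \<omega> = a}
          * measure M {\<omega>\<in>space M. Z \<omega> = b \<and> X \<omega> = a}"
    \<comment> \<open>P(m = 0 | x, y, z; gamma) = h(z; gamma)\<close>
    and match_prob: "\<And>a b B. B \<in> sets N \<Longrightarrow>
        measure M {\<omega>\<in>space M. m \<omega> = 0 \<and> X \<omega> = a \<and> Z \<omega> = b \<and> Y \<omega> \<in> B}
          = h b \<gamma> * measure M {\<omega>\<in>space M. X \<omega> = a \<and> Z \<omega> = b \<and> Y \<omega> \<in> B}"
    and h_range: "\<And>i. i < n \<Longrightarrow> 0 \<le> h (zs i) \<gamma> \<and> h (zs i) \<gamma> < 1"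
  shows "is_cond_density M N Y {\<omega>\<in>space M. m \<omega> = 1}
           (\<lambda>y. \<Sum>j<n. omega n zs h \<gamma> j * f y (xs j) \<theta>)"
proof -
  interpret linked_file M N X Z m Y n xs zs f \<theta> h \<gamma>
    by (rule linked_file.intro[OF P linked_file_axioms.intro]) (fact assms)+
  define T where "T = (\<Sum>k<n. 1 - h (zs k) \<gamma>)"
  have T_pos: "T > 0"
    unfolding T_def using n_pos h_range by (intro sum_pos) auto
  show ?thesis
  proof (rule is_cond_density_sumI)
    show "{\<omega>\<in>space M. m \<omega> = 1} \<in> events" by measurable
    show "prob {\<omega>\<in>space M. m \<omega> = 1} > 0"
      using prob_mismatch T_pos n_pos by (simp add: T_def)
    show "0 \<le> omega n zs h \<gamma> j" if "j \<in> {..<n}" for j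
      using h_range[of j] that T_pos by (simp add: omega_def T_def[symmetric])
    show "prob {\<omega>\<in>space M. Y \<omega> \<in> B \<and> \<omega> \<in> {\<omega>\<in>space M. m \<omega> = 1}}
        = prob {\<omega>\<in>space M. m \<omega> = 1} * (\<Sum>j<n. omega n zs h \<gamma> j * (LINT y:B|N. f y (xs j) \<theta>))"
      if "B \<in> sets N" for B
    proof -
      have "{\<omega>\<in>space M. Y \<omega> \<in> B \<and> \<omega> \<in> {\<omega>\<in>space M. m \<omega> = 1}}
          = {\<omega>\<in>space M. Y \<omega> \<in> B \<and> m \<omega> = 1}"
        by auto
      then show ?thesis
        using prob_Y_mismatch[OF that] prob_mismatch T_pos
        by (simp add: omega_def T_def[symmetric] sum_distrib_left sum_divide_distrib)
    qed
  qed (use f_meas f_nonneg f_int in auto)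
qed

end
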